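(* Let $M^2$ be a surface in $\mathbb{R}^4$ free of flat points. Then the tangent indicatrix $\chi$ is a rectangular hyperbola (a Lorentz circle) at each point if and only if the ellipse of normal curvature at each point is a line segment which is not collinear with the mean curvature vector field $H$.
   Context: Let $M^2: z=z(u,v)$ be a regular surface in $\mathbb{R}^4$ with first fundamental form $I=E\,du^2+2F\,du\,dv+G\,dv^2$, $W=\sqrt{EG-F^2}$, second fundamental form $\sigma$, and mean curvature vector $H=\frac12(\sigma(x,x)+\sigma(y,y))$ ($\{x,y\}$ any orthonormal tangent basis). Choose an orthonormal normal frame $\{e_1,e_2\}$ with $\{z_u,z_v,e_1,e_2\}$ positively oriented, write $\sigma(z_u,z_u)=c_{11}^1e_1+c_{11}^2e_2$, $\sigma(z_u,z_v)=c_{12}^1e_1+c_{12}^2e_2$, $\sigma(z_v,z_v)=c_{22}^1e_1+c_{22}^2e_2$, and set $L=\frac{2}{W}(c_{11}^1c_{12}^2-c_{12}^1c_{11}^2)$, $M=\frac{1}{W}(c_{11}^1c_{22}^2-c_{22}^1c_{11}^2)$, $N=\frac{2}{W}(c_{12}^1c_{22}^2-c_{22}^1c_{12}^2)$. A point is flat if $L=M=N=0$; "free of flat points" means $(L,M,N)\ne(0,0,0)$ everywhere. The principal normal curvatures $\nu',\nu''$ at a point are the roots of $(EG-F^2)\nu^2-(EN+GL-2FM)\nu+(LN-M^2)=0$, with corresponding $I$-orthogonal principal directions; the tangent indicatrix $\chi$ is the conic $\nu'X^2+\nu''Y^2=\varepsilon$ ($\varepsilon=\pm1$) in Cartesian coordinates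 of $T_pM^2$ w.r.t. an orthonormal basis of principal directions; it is a rectangular hyperbola iff $\nu''=-\nu'\neq0$. The ellipse of normal curvature at $p$ is $\{\sigma(v,v): v\in T_pM^2, |v|=1\}$, centered at $H(p)$; "not collinear with $H$" means the segment's direction is not parallel to $H(p)$. *)

theory Defs
  imports "HOL-Analysis.Analysis"
begin

text \<open>A surface patch z : U \<subseteq> R^2 \<rightarrow> R^4, parameters (u,v) = (p$1, p$2).\<close>

definition zu :: "(real^2 \<Rightarrow> real^4) \<Rightarrow> real^2 \<Rightarrow> real^4" where
  "zu z p = frechet_derivative z (at p) (axis 1 1)"
definition zv :: "(real^2 \<Rightarrow> real^4) \<Rightarrow> real^2 \<Rightarrow> real^4" where
  "zv z p = frechet_derivative z (at p) (axis 2 1)"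
definition zuu :: "(real^2 \<Rightarrow> real^4) \<Rightarrow> real^2 \<Rightarrow> real^4" where
  "zuu z p = frechet_derivative (zu z) (at p) (axis 1 1)"
definition zuv :: "(real^2 \<Rightarrow> real^4) \<Rightarrow> real^2 \<Rightarrow> real^4" where
  "zuv z p = frechet_derivative (zu z) (at p) (axis 2 1)"
definition zvv :: "(real^2 \<Rightarrow> real^4) \<Rightarrow> real^2 \<Rightarrow> real^4" where
  "zvv z p = frechet_derivative (zv z) (at p) (axis 2 1)"

definition regular_surface :: "(real^2 \<Rightarrow> real^4) \<Rightarrow> (real^2) set \<Rightarrow> bool" where
  "regular_surface z U \<longleftrightarrow> open U \<and>
     (\<forall>p\<in>U. z differentiable (at p) \<and> zu z differentiable (at p) \<and> zv z differentiable (at p)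
        \<and> zu z p \<noteq> zv z p \<and> independent {zu z p, zv z p})"

definition coefE :: "(real^2 \<Rightarrow> real^4) \<Rightarrow> real^2 \<Rightarrow> real" where
  "coefE z p = zu z p \<bullet> zu z p"
definition coefF :: "(real^2 \<Rightarrow> real^4) \<Rightarrow> real^2 \<Rightarrow> real" where
  "coefF z p = zu z p \<bullet> zv z p"
definition coefG :: "(real^2 \<Rightarrow> real^4) \<Rightarrow> real^2 \<Rightarrow> real" where
  "coefG z p = zv z p \<bullet> zv z p"
definition coefW :: "(real^2 \<Rightarrow> real^4) \<Rightarrow> real^2 \<Rightarrow> real" where
  "coefW z p = sqrt (coefE z p * coefG z p - (coefF z p)\<^sup>2)"

definition pos_normal_frame :: "(real^2 \<Rightarrow> real^4) \<Rightarrow> real^2 \<Rightarrow> real^4 \<Rightarrow> real^4 \<Rightarrow> bool" where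
  "pos_normal_frame z p e1 e2 \<longleftrightarrow>
     e1 \<bullet> zu z p = 0 \<and> e1 \<bullet> zv z p = 0 \<and> e2 \<bullet> zu z p = 0 \<and> e2 \<bullet> zv z p = 0 \<and>
     norm e1 = 1 \<and> norm e2 = 1 \<and> e1 \<bullet> e2 = 0 \<and>
     det (vector [zu z p, zv z p, e1, e2] :: real^4^4) > 0"

definition nframe :: "(real^2 \<Rightarrow> real^4) \<Rightarrow> real^2 \<Rightarrow> (real^4) \<times> (real^4)" where
  "nframe z p = (SOME f. pos_normal_frame z p (fst f) (snd f))"
definition ne1 :: "(real^2 \<Rightarrow> real^4) \<Rightarrow> real^2 \<Rightarrow> real^4" where
  "ne1 z p = fst (nframe z p)"
definition ne2 :: "(real^2 \<Rightarrow> real^4) \<Rightarrow> real^2 \<Rightarrow> real^4" where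
  "ne2 z p = snd (nframe z p)"

definition nproj :: "(real^2 \<Rightarrow> real^4) \<Rightarrow> real^2 \<Rightarrow> real^4 \<Rightarrow> real^4" where
  "nproj z p w = (w \<bullet> ne1 z p) *\<^sub>R ne1 z p + (w \<bullet> ne2 z p) *\<^sub>R ne2 z p"

definition sig11 :: "(real^2 \<Rightarrow> real^4) \<Rightarrow> real^2 \<Rightarrow> real^4" where
  "sig11 z p = nproj z p (zuu z p)"
definition sig12 :: "(real^2 \<Rightarrow> real^4) \<Rightarrow> real^2 \<Rightarrow> real^4" where
  "sig12 z p = nproj z p (zuv z p)"
definition sig22 :: "(real^2 \<Rightarrow> real^4) \<Rightarrow> real^2 \<Rightarrow> real^4" where
  "sig22 z p = nproj z p (zvv z p)"

definition cc :: "(real^2 \<Rightarrow> real^4) \<Rightarrow> real^2 \<Rightarrow> nat \<Rightarrow> nat \<Rightarrow> nat \<Rightarrow> real" where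
  "cc z p i j k =
     (let s = (if i = 1 \<and> j = 1 then sig11 z p else if i = 2 \<and> j = 2 then sig22 z p else sig12 z p);
          e = (if k = 1 then ne1 z p else ne2 z p) in s \<bullet> e)"

definition coefL :: "(real^2 \<Rightarrow> real^4) \<Rightarrow> real^2 \<Rightarrow> real" where
  "coefL z p = 2 / coefW z p * (cc z p 1 1 1 * cc z p 1 2 2 - cc z p 1 2 1 * cc z p 1 1 2)"
definition coefM :: "(real^2 \<Rightarrow> real^4) \<Rightarrow> real^2 \<Rightarrow> real" where
  "coefM z p = 1 / coefW z p * (cc z p 1 1 1 * cc z p 2 2 2 - cc z p 2 2 1 * cc z p 1 1 2)"
definition coefN :: "(real^2 \<Rightarrow> real^4) \<Rightarrow> real^2 \<Rightarrow> real" where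
  "coefN z p = 2 / coefW z p * (cc z p 1 2 1 * cc z p 2 2 2 - cc z p 2 2 1 * cc z p 1 2 2)"

definition flat_point :: "(real^2 \<Rightarrow> real^4) \<Rightarrow> real^2 \<Rightarrow> bool" where
  "flat_point z p \<longleftrightarrow> coefL z p = 0 \<and> coefM z p = 0 \<and> coefN z p = 0"

definition tvec :: "(real^2 \<Rightarrow> real^4) \<Rightarrow> real^2 \<Rightarrow> real \<times> real \<Rightarrow> real^4" where
  "tvec z p x = fst x *\<^sub>R zu z p + snd x *\<^sub>R zv z p"

definition sff :: "(real^2 \<Rightarrow> real^4) \<Rightarrow> real^2 \<Rightarrow> real \<times> real \<Rightarrow> real \<times> real \<Rightarrow> real^4" where
  "sff z p x y = (fst x * fst y) *\<^sub>R sig11 z p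
      + (fst x * snd y + snd x * fst y) *\<^sub>R sig12 z p + (snd x * snd y) *\<^sub>R sig22 z p"

definition mean_curv :: "(real^2 \<Rightarrow> real^4) \<Rightarrow> real^2 \<Rightarrow> real^4" where
  "mean_curv z p = (SOME h. \<exists>x y. norm (tvec z p x) = 1 \<and> norm (tvec z p y) = 1 \<and>
        tvec z p x \<bullet> tvec z p y = 0 \<and> h = (1/2) *\<^sub>R (sff z p x x + sff z p y y))"

definition normal_ellipse :: "(real^2 \<Rightarrow> real^4) \<Rightarrow> real^2 \<Rightarrow> (real^4) set" where
  "normal_ellipse z p = {sff z p v v | v. norm (tvec z p v) = 1}"

definition principal_normal_curvatures :: "(real^2 \<Rightarrow> real^4) \<Rightarrow> real^2 \<Rightarrow> real \<Rightarrow> real \<Rightarrow> bool" where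
  "principal_normal_curvatures z p nu1 nu2 \<longleftrightarrow>
     (\<forall>x::real. (coefE z p * coefG z p - (coefF z p)\<^sup>2) * x\<^sup>2
        - (coefE z p * coefN z p + coefG z p * coefL z p - 2 * coefF z p * coefM z p) * x
        + (coefL z p * coefN z p - (coefM z p)\<^sup>2)
      = (coefE z p * coefG z p - (coefF z p)\<^sup>2) * (x - nu1) * (x - nu2))"

text \<open>Tangent indicatrix nu' X^2 + nu'' Y^2 = eps is a rectangular hyperbola iff nu'' = -nu' \<noteq> 0.\<close>
definition indicatrix_rect_hyperbola :: "(real^2 \<Rightarrow> real^4) \<Rightarrow> real^2 \<Rightarrow> bool" where
  "indicatrix_rect_hyperbola z p \<longleftrightarrow>
     (\<exists>nu1 nu2. principal_normal_curvatures z p nu1 nu2 \<and> nu2 = - nu1 \<and> nu1 \<noteq> 0)"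

definition ellipse_segment_not_collinear_H :: "(real^2 \<Rightarrow> real^4) \<Rightarrow> real^2 \<Rightarrow> bool" where
  "ellipse_segment_not_collinear_H z p \<longleftrightarrow>
     (\<exists>A B. A \<noteq> B \<and> normal_ellipse z p = closed_segment A B \<and>
        \<not> (\<exists>c. mean_curv z p = c *\<^sub>R (B - A)))"

end

theory Submission
  imports Defs
begin

text \<open>
  Both conditions are equivalent, at every point, to EN + GL - 2FM = 0 together with
  (L, M, N) \<noteq> 0. The principal normal curvatures are opposite and nonzero iff the trace
  EN + GL - 2FM vanishes and LN - M^2 < 0; once the trace vanishes, E^2 (LN - M^2) is minus a
  sum of squares that vanishes only at flat points. For the ellipse, write a unit tangent vector
  as cos \<theta> t1 + sin \<theta> t2 in an orthonormal tangent frame; then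
  \<sigma>(v, v) = H + cos 2\<theta> a1 + sin 2\<theta> a2, which is a segment not collinear with H iff a1 and a2
  are parallel and H is not parallel to them. In the normal plane these are conditions on 2x2
  determinants, wedge a1 a2 = 0 and (wedge H a1, wedge H a2) \<noteq> 0, and expanding H, a1, a2 in
  terms of \<sigma>(z_u, z_u), \<sigma>(z_u, z_v), \<sigma>(z_v, z_v) turns them into the same condition on L, M, N.
\<close>

section \<open>Degenerate ellipses\<close>

definition ellipse :: "'a::real_vector \<Rightarrow> 'a \<Rightarrow> 'a \<Rightarrow> 'a set" where
  "ellipse H a b = {H + c *\<^sub>R a + t *\<^sub>R b | c t. c\<^sup>2 + t\<^sup>2 = 1}"

lemma unit_circle_attains_linear_form:
  fixes \<alpha> \<beta> \<sigma> :: real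
  assumes "\<sigma>\<^sup>2 \<le> \<alpha>\<^sup>2 + \<beta>\<^sup>2"
  obtains c t where "c\<^sup>2 + t\<^sup>2 = 1" "c * \<alpha> + t * \<beta> = \<sigma>"
proof (cases "\<alpha>\<^sup>2 + \<beta>\<^sup>2 = 0")
  case True
  then have "\<sigma> = 1 * \<alpha> + 0 * \<beta>" using assms by (simp add: sum_power2_eq_zero_iff)
  then show thesis using that[of 1 0] by simp
next
  case False
  define r where "r = \<alpha>\<^sup>2 + \<beta>\<^sup>2"
  have r: "r > 0" using False by (simp add: r_def sum_power2_gt_zero_iff)
  define \<tau> where "\<tau> = sqrt (r - \<sigma>\<^sup>2)"
  have \<tau>: "\<tau>\<^sup>2 = r - \<sigma>\<^sup>2" using assms by (simp add: \<tau>_def r_def)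
  define c where "c = (\<sigma> * \<alpha> - \<tau> * \<beta>) / r"
  define t where "t = (\<sigma> * \<beta> + \<tau> * \<alpha>) / r"
  have "(\<sigma> * \<alpha> - \<tau> * \<beta>)\<^sup>2 + (\<sigma> * \<beta> + \<tau> * \<alpha>)\<^sup>2 = (\<sigma>\<^sup>2 + \<tau>\<^sup>2) * r"
    by (simp add: r_def algebra_simps power2_eq_square)
  also have "\<dots> = r\<^sup>2" using \<tau> by (simp add: power2_eq_square)
  finally have "c\<^sup>2 + t\<^sup>2 = r\<^sup>2 / r\<^sup>2"
    unfolding c_def t_def power_divide by (simp only: add_divide_distrib[symmetric])
  also have "\<dots> = 1" using r by simp
  finally have "c\<^sup>2 + t\<^sup>2 = 1" .
  moreover have "c * \<alpha> + t * \<beta> = \<sigma>"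
    using r by (simp add: c_def t_def field_simps) (simp add: r_def algebra_simps power2_eq_square)
  ultimately show thesis by (rule that)
qed

lemma linear_form_on_unit_circle:
  fixes \<alpha> \<beta> :: real
  shows "{c * \<alpha> + t * \<beta> | c t. c\<^sup>2 + t\<^sup>2 = 1} = {- sqrt (\<alpha>\<^sup>2 + \<beta>\<^sup>2) .. sqrt (\<alpha>\<^sup>2 + \<beta>\<^sup>2)}"
    (is "?L = {- ?\<rho> .. ?\<rho>}")
proof (intro equalityI subsetI)
  fix \<sigma> assume "\<sigma> \<in> ?L"
  then obtain c t where \<sigma>: "\<sigma> = c * \<alpha> + t * \<beta>" and ct: "c\<^sup>2 + t\<^sup>2 = 1" by blast
  have "(c\<^sup>2 + t\<^sup>2) * (\<alpha>\<^sup>2 + \<beta>\<^sup>2) - \<sigma>\<^sup>2 = (c * \<beta> - t * \<alpha>)\<^sup>2"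
    unfolding \<sigma> by (simp add: algebra_simps power2_eq_square)
  then have "\<bar>\<sigma>\<bar>\<^sup>2 \<le> \<alpha>\<^sup>2 + \<beta>\<^sup>2"
    using ct by (metis diff_ge_0_iff_ge mult_1 power2_abs zero_le_power2)
  then have "\<bar>\<sigma>\<bar> \<le> ?\<rho>" by (rule real_le_rsqrt)
  then show "\<sigma> \<in> {- ?\<rho> .. ?\<rho>}" by auto
next
  fix \<sigma> assume "\<sigma> \<in> {- ?\<rho> .. ?\<rho>}"
  then have "\<bar>\<sigma>\<bar> \<le> \<bar>?\<rho>\<bar>" by auto
  then have "\<sigma>\<^sup>2 \<le> \<alpha>\<^sup>2 + \<beta>\<^sup>2" by (simp only: abs_le_square_iff) simp
  then obtain c t where "c\<^sup>2 + t\<^sup>2 = 1" "c * \<alpha> + t * \<beta> = \<sigma>" by (rule unit_circle_attains_linear_form)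
  then show "\<sigma> \<in> ?L" by force
qed

lemma ellipse_with_parallel_axes:
  fixes H w :: "'a::real_vector" and \<alpha> \<beta> :: real
  defines "\<rho> \<equiv> sqrt (\<alpha>\<^sup>2 + \<beta>\<^sup>2)"
  shows "ellipse H (\<alpha> *\<^sub>R w) (\<beta> *\<^sub>R w) = closed_segment (H - \<rho> *\<^sub>R w) (H + \<rho> *\<^sub>R w)"
proof -
  have "ellipse H (\<alpha> *\<^sub>R w) (\<beta> *\<^sub>R w) = (\<lambda>\<sigma>. H + \<sigma> *\<^sub>R w) ` {c * \<alpha> + t * \<beta> | c t. c\<^sup>2 + t\<^sup>2 = 1}"
    unfolding ellipse_def by (auto simp: add.assoc scaleR_add_left[symmetric])
  also have "\<dots> = (\<lambda>\<sigma>. H + \<sigma> *\<^sub>R w) ` closed_segment (- \<rho>) \<rho>"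
    unfolding linear_form_on_unit_circle closed_segment_eq_real_ivl \<rho>_def by simp
  also have "\<dots> = (\<lambda>x. H + x) ` closed_segment ((- \<rho>) *\<^sub>R w) (\<rho> *\<^sub>R w)"
    using closed_segment_linear_image[of "\<lambda>\<sigma>. \<sigma> *\<^sub>R w" "- \<rho>" \<rho>]
    by (simp add: image_image linear_iff scaleR_add_left)
  also have "\<dots> = closed_segment (H + (- \<rho>) *\<^sub>R w) (H + \<rho> *\<^sub>R w)"
    by (rule closed_segment_translation[symmetric])
  finally show ?thesis by simp
qed

lemma ellipse_in_segment_imp_parallel_axes:
  fixes H a b :: "'a::real_vector"
  assumes "ellipse H a b \<subseteq> closed_segment A B"
  obtains \<alpha> \<beta> where "a = \<alpha> *\<^sub>R (B - A)" "b = \<beta> *\<^sub>R (B - A)"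
proof -
  have on_line: "\<exists>u. X = A + u *\<^sub>R (B - A)" if "X \<in> ellipse H a b" for X
  proof -
    have "X \<in> closed_segment A B" using that assms by blast
    then obtain u where "X = (1 - u) *\<^sub>R A + u *\<^sub>R B" by (auto simp: in_segment)
    then show ?thesis by (auto simp: algebra_simps)
  qed
  have "H + a \<in> ellipse H a b" "H - a \<in> ellipse H a b" "H + b \<in> ellipse H a b" "H - b \<in> ellipse H a b"
    unfolding ellipse_def by (force intro: exI[of _ 1] exI[of _ "-1"] exI[of _ 0])+
  then obtain u1 u2 u3 u4 where u:
    "H + a = A + u1 *\<^sub>R (B - A)" "H - a = A + u2 *\<^sub>R (B - A)"
    "H + b = A + u3 *\<^sub>R (B - A)" "H - b = A + u4 *\<^sub>R (B - A)"
    using on_line by metis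
  have half: "x = (1 / 2) *\<^sub>R ((H + x) - (H - x))" for x :: 'a
    by (simp add: scaleR_2[symmetric] del: scaleR_2)
  have "a = ((u1 - u2) / 2) *\<^sub>R (B - A)" "b = ((u3 - u4) / 2) *\<^sub>R (B - A)"
    by (subst half, unfold u, simp add: scaleR_diff_left[symmetric])+
  then show thesis by (rule that)
qed

definition wedge :: "'a::real_inner \<Rightarrow> 'a \<Rightarrow> 'a \<Rightarrow> 'a \<Rightarrow> real" where
  "wedge e1 e2 X Y = (X \<bullet> e1) * (Y \<bullet> e2) - (X \<bullet> e2) * (Y \<bullet> e1)"

lemma wedge_add_left: "wedge e1 e2 (X + Y) Z = wedge e1 e2 X Z + wedge e1 e2 Y Z"
  and wedge_scaleR_left: "wedge e1 e2 (k *\<^sub>R X) Z = k * wedge e1 e2 X Z"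
  and wedge_add_right: "wedge e1 e2 Z (X + Y) = wedge e1 e2 Z X + wedge e1 e2 Z Y"
  and wedge_scaleR_right: "wedge e1 e2 Z (k *\<^sub>R X) = k * wedge e1 e2 Z X"
  and wedge_self: "wedge e1 e2 X X = 0"
  and wedge_commute: "wedge e1 e2 Y X = - wedge e1 e2 X Y"
  unfolding wedge_def by (simp_all add: inner_add_left algebra_simps)

lemmas wedge_bilinear =
  wedge_add_left wedge_scaleR_left wedge_add_right wedge_scaleR_right wedge_self

locale orthonormal_pair =
  fixes e1 e2 :: "'a::real_inner"
  assumes norm_e1: "e1 \<bullet> e1 = 1" and norm_e2: "e2 \<bullet> e2 = 1" and orth: "e1 \<bullet> e2 = 0"
begin

lemma span_pair_expansion:
  assumes "X \<in> span {e1, e2}"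
  shows "X = (X \<bullet> e1) *\<^sub>R e1 + (X \<bullet> e2) *\<^sub>R e2"
proof -
  obtain k where "X - k *\<^sub>R e1 \<in> span {e2}"
    using assms span_breakdown_eq by blast
  then obtain j where "X - k *\<^sub>R e1 = j *\<^sub>R e2" by (auto simp: span_singleton)
  then have X: "X = k *\<^sub>R e1 + j *\<^sub>R e2" by (metis add.commute diff_add_cancel)
  have "X \<bullet> e1 = k" "X \<bullet> e2 = j"
    unfolding X using norm_e1 norm_e2 orth by (simp_all add: inner_add_left inner_commute[of e2 e1])
  then show ?thesis using X by simp
qed

lemma parallel_if_wedge_eq_0:
  assumes X: "X \<in> span {e1, e2}" and Y: "Y \<in> span {e1, e2}"
    and "Y \<noteq> 0" and wedge: "wedge e1 e2 X Y = 0"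
  obtains k where "X = k *\<^sub>R Y"
proof -
  define x1 x2 y1 y2 where "x1 = X \<bullet> e1" "x2 = X \<bullet> e2" "y1 = Y \<bullet> e1" "y2 = Y \<bullet> e2"
  have X': "X = x1 *\<^sub>R e1 + x2 *\<^sub>R e2" and Y': "Y = y1 *\<^sub>R e1 + y2 *\<^sub>R e2"
    unfolding x1_x2_y1_y2_def using span_pair_expansion X Y by blast+
  have cross: "x1 * y2 = x2 * y1" using wedge by (simp add: wedge_def x1_x2_y1_y2_def)
  have n: "y1\<^sup>2 + y2\<^sup>2 > 0" using \<open>Y \<noteq> 0\<close> Y' by (auto simp: sum_power2_gt_zero_iff)
  define k where "k = (x1 * y1 + x2 * y2) / (y1\<^sup>2 + y2\<^sup>2)"
  have "(x1 * y1 + x2 * y2) * y1 = x1 * (y1\<^sup>2 + y2\<^sup>2)" "(x1 * y1 + x2 * y2) * y2 = x2 * (y1\<^sup>2 + y2\<^sup>2)"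
    using cross by (simp_all add: algebra_simps power2_eq_square)
  then have "x1 = k * y1" "x2 = k * y2"
    using n unfolding k_def by (auto simp: divide_simps)
  then have "X = k *\<^sub>R Y" unfolding X' Y' by (simp add: scaleR_add_right)
  then show thesis by (rule that)
qed

lemma ellipse_segment_imp_wedge_conditions:
  assumes H: "H \<in> span {e1, e2}" and a: "a \<in> span {e1, e2}" and b: "b \<in> span {e1, e2}"
    and "A \<noteq> B" and seg: "ellipse H a b = closed_segment A B" and not_coll: "\<not> (\<exists>k. H = k *\<^sub>R (B - A))"
  shows "wedge e1 e2 a b = 0 \<and> (wedge e1 e2 H a \<noteq> 0 \<or> wedge e1 e2 H b \<noteq> 0)"
proof -
  obtain \<alpha> \<beta> where ab: "a = \<alpha> *\<^sub>R (B - A)" "b = \<beta> *\<^sub>R (B - A)"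
    using ellipse_in_segment_imp_parallel_axes seg by blast
  have "wedge e1 e2 H a \<noteq> 0 \<or> wedge e1 e2 H b \<noteq> 0"
  proof (rule ccontr)
    assume "\<not> ?thesis"
    then have wedge_H: "\<alpha> * wedge e1 e2 H (B - A) = 0" "\<beta> * wedge e1 e2 H (B - A) = 0"
      unfolding ab by (simp_all add: wedge_scaleR_right)
    show False
    proof (cases "\<alpha> = 0 \<and> \<beta> = 0")
      case True
      then have "closed_segment A B = {H}"
        using ellipse_with_parallel_axes[of H \<alpha> "B - A" \<beta>] seg ab by simp
      then show False using \<open>A \<noteq> B\<close> by (simp add: closed_segment_eq_sing)
    next
      case False
      then have "B - A \<in> span {e1, e2}"
        using ab a b by (metis divideR_right span_scale)
      moreover have "wedge e1 e2 H (B - A) = 0" using wedge_H False by auto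
      ultimately obtain k where "H = k *\<^sub>R (B - A)"
        using parallel_if_wedge_eq_0 H \<open>A \<noteq> B\<close> by (metis eq_iff_diff_eq_0)
      then show False using not_coll by blast
    qed
  qed
  then show ?thesis unfolding ab by (simp add: wedge_scaleR_left wedge_scaleR_right wedge_self)
qed

lemma wedge_conditions_imp_ellipse_segment:
  assumes a: "a \<in> span {e1, e2}" and b: "b \<in> span {e1, e2}"
    and "wedge e1 e2 a b = 0" and "wedge e1 e2 H a \<noteq> 0 \<or> wedge e1 e2 H b \<noteq> 0"
  shows "\<exists>A B. A \<noteq> B \<and> ellipse H a b = closed_segment A B \<and> \<not> (\<exists>k. H = k *\<^sub>R (B - A))"
proof -
  obtain w \<alpha> \<beta> where ab: "a = \<alpha> *\<^sub>R w" "b = \<beta> *\<^sub>R w" and Hw: "wedge e1 e2 H w \<noteq> 0"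
  proof (cases "wedge e1 e2 H a \<noteq> 0")
    case True
    then have "a \<noteq> 0" by (auto simp: wedge_def)
    moreover have "wedge e1 e2 b a = 0"
      using \<open>wedge e1 e2 a b = 0\<close> wedge_commute[of e1 e2 a b] by simp
    ultimately obtain k where "b = k *\<^sub>R a" using parallel_if_wedge_eq_0 b a by blast
    then show thesis using that[of 1 a k] True by simp
  next
    case False
    then have "wedge e1 e2 H b \<noteq> 0" using assms(4) by blast
    moreover from this have "b \<noteq> 0" by (auto simp: wedge_def)
    ultimately obtain k where "a = k *\<^sub>R b"
      using parallel_if_wedge_eq_0 a b \<open>wedge e1 e2 a b = 0\<close> by blast
    then show thesis using that[of k b 1] \<open>wedge e1 e2 H b \<noteq> 0\<close> by simp
  qed
  define \<rho> where "\<rho> = sqrt (\<alpha>\<^sup>2 + \<beta>\<^sup>2)"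
  have "\<alpha> \<noteq> 0 \<or> \<beta> \<noteq> 0"
    using assms(4) unfolding ab by (auto simp: wedge_scaleR_right)
  then have "\<rho> > 0" by (simp add: \<rho>_def sum_power2_gt_zero_iff)
  have "w \<noteq> 0" using Hw by (auto simp: wedge_def)
  have diff: "(H + \<rho> *\<^sub>R w) - (H - \<rho> *\<^sub>R w) = 2 *\<^sub>R (\<rho> *\<^sub>R w)"
    by (simp only: scaleR_2) (simp add: algebra_simps)
  show ?thesis
  proof (intro exI conjI)
    show "H - \<rho> *\<^sub>R w \<noteq> H + \<rho> *\<^sub>R w"
      using \<open>\<rho> > 0\<close> \<open>w \<noteq> 0\<close> diff by (metis mult_eq_0_iff right_minus_eq scaleR_eq_0_iff
          zero_neq_numeral order_less_irrefl)
    show "ellipse H a b = closed_segment (H - \<rho> *\<^sub>R w) (H + \<rho> *\<^sub>R w)"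
      unfolding ab \<rho>_def by (rule ellipse_with_parallel_axes)
    show "\<not> (\<exists>k. H = k *\<^sub>R ((H + \<rho> *\<^sub>R w) - (H - \<rho> *\<^sub>R w)))"
      using Hw unfolding diff by (auto simp: wedge_scaleR_left wedge_self)
  qed
qed

lemma ellipse_segment_not_collinear_iff:
  assumes "H \<in> span {e1, e2}" and "a \<in> span {e1, e2}" and "b \<in> span {e1, e2}"
  shows "(\<exists>A B. A \<noteq> B \<and> ellipse H a b = closed_segment A B \<and> \<not> (\<exists>k. H = k *\<^sub>R (B - A)))
    \<longleftrightarrow> wedge e1 e2 a b = 0 \<and> (wedge e1 e2 H a \<noteq> 0 \<or> wedge e1 e2 H b \<noteq> 0)"
  using ellipse_segment_imp_wedge_conditions wedge_conditions_imp_ellipse_segment assms by blast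

end

section \<open>Quadratics with opposite roots\<close>

lemma opposite_nonzero_roots_iff:
  fixes \<Delta> T C :: real
  assumes "\<Delta> > 0"
  shows "(\<exists>\<nu>1 \<nu>2. (\<forall>x. \<Delta> * x\<^sup>2 - T * x + C = \<Delta> * (x - \<nu>1) * (x - \<nu>2)) \<and> \<nu>2 = - \<nu>1 \<and> \<nu>1 \<noteq> 0)
    \<longleftrightarrow> T = 0 \<and> C < 0"
proof
  assume "\<exists>\<nu>1 \<nu>2. (\<forall>x. \<Delta> * x\<^sup>2 - T * x + C = \<Delta> * (x - \<nu>1) * (x - \<nu>2)) \<and> \<nu>2 = - \<nu>1 \<and> \<nu>1 \<noteq> 0"
  then obtain \<nu> where factor: "\<And>x. \<Delta> * x\<^sup>2 - T * x + C = \<Delta> * (x - \<nu>) * (x + \<nu>)" and "\<nu> \<noteq> 0"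
    by auto
  have C: "C = - \<Delta> * \<nu>\<^sup>2" using factor[of 0] by (simp add: power2_eq_square)
  have "\<Delta> - T + C = \<Delta> - \<Delta> * \<nu>\<^sup>2" using factor[of 1] by (simp add: algebra_simps power2_eq_square)
  then show "T = 0 \<and> C < 0" using C \<open>\<nu> \<noteq> 0\<close> assms by simp
next
  assume "T = 0 \<and> C < 0"
  define \<nu> where "\<nu> = sqrt (- C / \<Delta>)"
  have "- C / \<Delta> > 0" using \<open>T = 0 \<and> C < 0\<close> assms by (simp add: divide_neg_pos)
  then have "\<Delta> * \<nu>\<^sup>2 = - C" "\<nu> \<noteq> 0" using assms by (auto simp: \<nu>_def)
  then have "\<forall>x. \<Delta> * x\<^sup>2 - T * x + C = \<Delta> * (x - \<nu>) * (x - - \<nu>)"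
    using \<open>T = 0 \<and> C < 0\<close> by (simp add: algebra_simps power2_eq_square)
  then show "\<exists>\<nu>1 \<nu>2. (\<forall>x. \<Delta> * x\<^sup>2 - T * x + C = \<Delta> * (x - \<nu>1) * (x - \<nu>2)) \<and> \<nu>2 = - \<nu>1 \<and> \<nu>1 \<noteq> 0"
    using \<open>\<nu> \<noteq> 0\<close> by blast
qed

lemma discriminant_neg_iff:
  fixes E F G L M N :: real
  assumes "E > 0" and "E * G - F\<^sup>2 > 0" and trace: "E * N + G * L - 2 * F * M = 0"
  shows "L * N - M\<^sup>2 < 0 \<longleftrightarrow> \<not> (L = 0 \<and> M = 0 \<and> N = 0)"
proof -
  define S where "S = (E * M - F * L)\<^sup>2 + (E * G - F\<^sup>2) * L\<^sup>2"
  have EN: "E * N = 2 * F * M - G * L" using trace by simp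
  have "E\<^sup>2 * (L * N - M\<^sup>2) = E * L * (E * N) - E\<^sup>2 * M\<^sup>2"
    by (simp add: algebra_simps power2_eq_square)
  also have "\<dots> = - S"
    unfolding EN S_def by (simp add: algebra_simps power2_eq_square)
  finally have "E\<^sup>2 * (L * N - M\<^sup>2) = - S" .
  moreover have "S > 0 \<longleftrightarrow> \<not> (L = 0 \<and> M = 0 \<and> N = 0)"
    using assms(1,2) EN unfolding S_def by (cases "L = 0") (auto simp: add_nonneg_pos)
  moreover have "E\<^sup>2 > 0" using assms(1) by simp
  then have "L * N - M\<^sup>2 < 0 \<longleftrightarrow> E\<^sup>2 * (L * N - M\<^sup>2) < 0"
    by (simp add: mult_less_0_iff)
  ultimately show ?thesis by simp
qed

section \<open>The ellipse of a vector-valued quadratic form\<close>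

definition first_form :: "real \<Rightarrow> real \<Rightarrow> real \<Rightarrow> real \<times> real \<Rightarrow> real \<times> real \<Rightarrow> real" where
  "first_form E F G x y = E * fst x * fst y + F * (fst x * snd y + snd x * fst y) + G * snd x * snd y"

definition sigma_form :: "'a::real_vector \<Rightarrow> 'a \<Rightarrow> 'a \<Rightarrow> real \<times> real \<Rightarrow> real \<times> real \<Rightarrow> 'a" where
  "sigma_form s11 s12 s22 x y =
     (fst x * fst y) *\<^sub>R s11 + (fst x * snd y + snd x * fst y) *\<^sub>R s12 + (snd x * snd y) *\<^sub>R s22"

text \<open>The coefficients with respect to z_u, z_v of the tangent vector l t1 + m t2, where t1, t2 is
  the Gram-Schmidt orthonormalisation of z_u, z_v.\<close>

definition onb_coeffs :: "real \<Rightarrow> real \<Rightarrow> real \<Rightarrow> real \<Rightarrow> real \<Rightarrow> real \<times> real" where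
  "onb_coeffs E F G l m =
     (l / sqrt E - m * F / (sqrt E * sqrt (E * G - F\<^sup>2)), m * sqrt E / sqrt (E * G - F\<^sup>2))"

text \<open>Normal vectors are handled through their coefficient triples with respect to
  \<sigma>(z_u, z_u), \<sigma>(z_u, z_v), \<sigma>(z_v, z_v), so that vector identities become identities of triples.\<close>

definition lincomb3 :: "'a::real_vector \<Rightarrow> 'a \<Rightarrow> 'a \<Rightarrow> real \<times> real \<times> real \<Rightarrow> 'a" where
  "lincomb3 s11 s12 s22 c = fst c *\<^sub>R s11 + fst (snd c) *\<^sub>R s12 + snd (snd c) *\<^sub>R s22"

lemma lincomb3_add: "lincomb3 s11 s12 s22 (c + d) = lincomb3 s11 s12 s22 c + lincomb3 s11 s12 s22 d"
  and lincomb3_scaleR: "lincomb3 s11 s12 s22 (k *\<^sub>R c) = k *\<^sub>R lincomb3 s11 s12 s22 c"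
  unfolding lincomb3_def by (simp_all add: algebra_simps)

lemma sigma_form_lincomb3: "sigma_form s11 s12 s22 x x = lincomb3 s11 s12 s22 (fst x * fst x, 2 * fst x * snd x, snd x * snd x)"
  unfolding lincomb3_def sigma_form_def by (simp add: algebra_simps)

text \<open>In terms of the orthonormal frame: ellipse_centre = (\<sigma>(t1, t1) + \<sigma>(t2, t2)) / 2,
  ellipse_axis1 = (\<sigma>(t1, t1) - \<sigma>(t2, t2)) / 2 and ellipse_axis2 = \<sigma>(t1, t2).\<close>

definition ellipse_centre :: "'a::real_vector \<Rightarrow> 'a \<Rightarrow> 'a \<Rightarrow> real \<Rightarrow> real \<Rightarrow> real \<Rightarrow> 'a" where
  "ellipse_centre s11 s12 s22 E F G =
     lincomb3 s11 s12 s22 ((G, - 2 * F, E) /\<^sub>R (2 * (E * G - F\<^sup>2)))"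

definition ellipse_axis1 :: "'a::real_vector \<Rightarrow> 'a \<Rightarrow> 'a \<Rightarrow> real \<Rightarrow> real \<Rightarrow> real \<Rightarrow> 'a" where
  "ellipse_axis1 s11 s12 s22 E F G =
     lincomb3 s11 s12 s22 ((E * G - 2 * F\<^sup>2, 2 * F * E, - E\<^sup>2) /\<^sub>R (2 * E * (E * G - F\<^sup>2)))"

definition ellipse_axis2 :: "'a::real_vector \<Rightarrow> 'a \<Rightarrow> 'a \<Rightarrow> real \<Rightarrow> real \<Rightarrow> real \<Rightarrow> 'a" where
  "ellipse_axis2 s11 s12 s22 E F G = lincomb3 s11 s12 s22 ((- F, E, 0) /\<^sub>R (E * sqrt (E * G - F\<^sup>2)))"

lemma first_form_eq_inner:
  fixes u v :: "'a::real_inner"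
  shows "(fst x *\<^sub>R u + snd x *\<^sub>R v) \<bullet> (fst y *\<^sub>R u + snd y *\<^sub>R v) = first_form (u \<bullet> u) (u \<bullet> v) (v \<bullet> v) x y"
  unfolding first_form_def by (simp add: inner_add_left inner_add_right inner_commute[of v u] algebra_simps)

lemma wedge_lincomb3:
  "wedge e1 e2 (lincomb3 s11 s12 s22 (a1, a2, a3)) (lincomb3 s11 s12 s22 (b1, b2, b3)) =
     (a1 * b2 - a2 * b1) * wedge e1 e2 s11 s12 + (a1 * b3 - a3 * b1) * wedge e1 e2 s11 s22
     + (a2 * b3 - a3 * b2) * wedge e1 e2 s12 s22"
  unfolding lincomb3_def wedge_bilinear
    wedge_commute[of e1 e2 s12 s11] wedge_commute[of e1 e2 s22 s11] wedge_commute[of e1 e2 s22 s12]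
  by (simp add: algebra_simps)

lemma unit_circle_double_angle:
  fixes c t :: real
  assumes "c\<^sup>2 + t\<^sup>2 = 1"
  obtains l m where "l\<^sup>2 + m\<^sup>2 = 1" "l\<^sup>2 - m\<^sup>2 = c" "2 * l * m = t"
proof
  have "\<bar>c\<bar> \<le> 1" using assms by (metis abs_le_square_iff abs_one le_add_same_cancel1 one_power2 zero_le_power2)
  define \<epsilon> :: real where "\<epsilon> = (if t \<ge> 0 then 1 else -1)"
  define l where "l = sqrt ((1 + c) / 2)"
  define m where "m = \<epsilon> * sqrt ((1 - c) / 2)"
  show "l\<^sup>2 + m\<^sup>2 = 1" "l\<^sup>2 - m\<^sup>2 = c"
    using \<open>\<bar>c\<bar> \<le> 1\<close> by (simp_all add: l_def m_def \<epsilon>_def power_mult_distrib field_simps)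
  have "2 * l * m = \<epsilon> * (2 * sqrt ((1 + c) / 2 * ((1 - c) / 2)))"
    by (simp add: l_def m_def real_sqrt_mult del: times_divide_eq_left times_divide_eq_right)
  also have "(1 + c) / 2 * ((1 - c) / 2) = (t / 2)\<^sup>2" using assms by (simp add: field_simps power2_eq_square)
  finally show "2 * l * m = t" by (simp add: \<epsilon>_def)
qed

lemma orthonormal_R2_double_angle_sums:
  fixes l1 m1 l2 m2 :: real
  assumes "l1\<^sup>2 + m1\<^sup>2 = 1" "l2\<^sup>2 + m2\<^sup>2 = 1" "l1 * l2 + m1 * m2 = 0"
  shows "(l1\<^sup>2 - m1\<^sup>2) + (l2\<^sup>2 - m2\<^sup>2) = 0" "l1 * m1 + l2 * m2 = 0"
proof -
  have "l1\<^sup>2 * (l2\<^sup>2 + m2\<^sup>2) - 2 * l1 * l2 * (l1 * l2 + m1 * m2) + l2\<^sup>2 * (l1\<^sup>2 + m1\<^sup>2) = (l1 * m2 - l2 * m1)\<^sup>2"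
    "m1\<^sup>2 * (l2\<^sup>2 + m2\<^sup>2) - 2 * m1 * m2 * (l1 * l2 + m1 * m2) + m2\<^sup>2 * (l1\<^sup>2 + m1\<^sup>2) = (l1 * m2 - l2 * m1)\<^sup>2"
    "l1 * m1 * (l2\<^sup>2 + m2\<^sup>2) - (l1 * m2 + l2 * m1) * (l1 * l2 + m1 * m2) + l2 * m2 * (l1\<^sup>2 + m1\<^sup>2) = 0"
    by (simp_all add: algebra_simps power2_eq_square)
  then show "(l1\<^sup>2 - m1\<^sup>2) + (l2\<^sup>2 - m2\<^sup>2) = 0" "l1 * m1 + l2 * m2 = 0"
    using assms by simp_all
qed

context
  fixes E F G :: real
  assumes E: "E > 0" and gram: "E * G - F\<^sup>2 > 0"
begin

lemma first_form_roots:
  obtains s W where "s > 0" "W > 0" "sqrt E = s" "sqrt (E * G - F\<^sup>2) = W"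
    "E * G - F\<^sup>2 = W\<^sup>2" "G = (W\<^sup>2 + F\<^sup>2) / E" "E = s\<^sup>2"
  using E gram by (intro that[of "sqrt E" "sqrt (E * G - F\<^sup>2)"]) (auto simp: field_simps)

lemma first_form_onb_coeffs: "first_form E F G (onb_coeffs E F G l m) (onb_coeffs E F G l' m') = l * l' + m * m'"
proof -
  obtain s W where sW: "s > 0" "W > 0" and roots: "sqrt E = s" "sqrt (E * G - F\<^sup>2) = W"
    "E * G - F\<^sup>2 = W\<^sup>2" "G = (W\<^sup>2 + F\<^sup>2) / E" "E = s\<^sup>2"
    by (rule first_form_roots)
  show ?thesis
    unfolding first_form_def onb_coeffs_def roots(1-4) unfolding roots(5)
    using sW by (simp add: field_simps power2_eq_square)
qed

lemma onb_coeffs_surj: "x = onb_coeffs E F G (sqrt E * fst x + F * snd x / sqrt E) (sqrt (E * G - F\<^sup>2) * snd x / sqrt E)"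
  using E gram by (simp add: onb_coeffs_def field_simps power2_eq_square prod_eq_iff)

lemma sigma_form_onb_coeffs:
  "sigma_form s11 s12 s22 (onb_coeffs E F G l m) (onb_coeffs E F G l m) =
    (l\<^sup>2 + m\<^sup>2) *\<^sub>R ellipse_centre s11 s12 s22 E F G + (l\<^sup>2 - m\<^sup>2) *\<^sub>R ellipse_axis1 s11 s12 s22 E F G
      + (2 * l * m) *\<^sub>R ellipse_axis2 s11 s12 s22 E F G"
proof -
  obtain s W where sW: "s > 0" "W > 0" and roots: "sqrt E = s" "sqrt (E * G - F\<^sup>2) = W"
    "E * G - F\<^sup>2 = W\<^sup>2" "G = (W\<^sup>2 + F\<^sup>2) / E" "E = s\<^sup>2"
    by (rule first_form_roots)
  let ?c = "lincomb3 s11 s12 s22"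
  have "sigma_form s11 s12 s22 (onb_coeffs E F G l m) (onb_coeffs E F G l m) =
      ?c ((l\<^sup>2 + m\<^sup>2) *\<^sub>R ((G, - 2 * F, E) /\<^sub>R (2 * (E * G - F\<^sup>2)))
        + (l\<^sup>2 - m\<^sup>2) *\<^sub>R ((E * G - 2 * F\<^sup>2, 2 * F * E, - E\<^sup>2) /\<^sub>R (2 * E * (E * G - F\<^sup>2)))
        + (2 * l * m) *\<^sub>R ((- F, E, 0) /\<^sub>R (E * sqrt (E * G - F\<^sup>2))))"
    unfolding sigma_form_lincomb3 onb_coeffs_def roots(1-4) unfolding roots(5) using sW
    by (intro arg_cong[where f = ?c]) (simp add: field_simps power2_eq_square)
  then show ?thesis
    by (simp only: lincomb3_add lincomb3_scaleR ellipse_centre_def ellipse_axis1_def ellipse_axis2_def)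
qed


lemma sigma_form_image_unit_circle:
  "{sigma_form s11 s12 s22 x x | x. first_form E F G x x = 1} =
    ellipse (ellipse_centre s11 s12 s22 E F G) (ellipse_axis1 s11 s12 s22 E F G) (ellipse_axis2 s11 s12 s22 E F G)"
proof (intro equalityI subsetI)
  fix X assume "X \<in> {sigma_form s11 s12 s22 x x | x. first_form E F G x x = 1}"
  then obtain x where X: "X = sigma_form s11 s12 s22 x x" and "first_form E F G x x = 1" by blast
  define l m where "l = sqrt E * fst x + F * snd x / sqrt E" and "m = sqrt (E * G - F\<^sup>2) * snd x / sqrt E"
  have x: "x = onb_coeffs E F G l m" unfolding l_def m_def by (rule onb_coeffs_surj)
  then have "l\<^sup>2 + m\<^sup>2 = 1"
    using \<open>first_form E F G x x = 1\<close> first_form_onb_coeffs[of l m l m] by (simp add: power2_eq_square)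
  moreover have "(l\<^sup>2 - m\<^sup>2)\<^sup>2 + (2 * l * m)\<^sup>2 = (l\<^sup>2 + m\<^sup>2)\<^sup>2" by (simp add: algebra_simps power2_eq_square)
  ultimately show "X \<in> ellipse (ellipse_centre s11 s12 s22 E F G) (ellipse_axis1 s11 s12 s22 E F G)
      (ellipse_axis2 s11 s12 s22 E F G)"
    unfolding X x sigma_form_onb_coeffs ellipse_def by force
next
  fix X assume "X \<in> ellipse (ellipse_centre s11 s12 s22 E F G) (ellipse_axis1 s11 s12 s22 E F G)
      (ellipse_axis2 s11 s12 s22 E F G)"
  then obtain c t where X: "X = ellipse_centre s11 s12 s22 E F G + c *\<^sub>R ellipse_axis1 s11 s12 s22 E F G
      + t *\<^sub>R ellipse_axis2 s11 s12 s22 E F G" and ct: "c\<^sup>2 + t\<^sup>2 = 1"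
    unfolding ellipse_def by blast
  obtain l m where lm: "l\<^sup>2 + m\<^sup>2 = 1" "l\<^sup>2 - m\<^sup>2 = c" "2 * l * m = t"
    using unit_circle_double_angle[OF ct] by blast
  then have "X = sigma_form s11 s12 s22 (onb_coeffs E F G l m) (onb_coeffs E F G l m)"
    unfolding X sigma_form_onb_coeffs by simp
  moreover have "first_form E F G (onb_coeffs E F G l m) (onb_coeffs E F G l m) = 1"
    using lm(1) by (simp add: first_form_onb_coeffs power2_eq_square)
  ultimately show "X \<in> {sigma_form s11 s12 s22 x x | x. first_form E F G x x = 1}" by blast
qed

lemma sigma_form_orthonormal_mean:
  assumes "first_form E F G x x = 1" "first_form E F G y y = 1" "first_form E F G x y = 0"
  shows "(1 / 2) *\<^sub>R (sigma_form s11 s12 s22 x x + sigma_form s11 s12 s22 y y) = ellipse_centre s11 s12 s22 E F G"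
proof -
  define l1 m1 l2 m2 where
    "l1 = sqrt E * fst x + F * snd x / sqrt E" "m1 = sqrt (E * G - F\<^sup>2) * snd x / sqrt E"
    "l2 = sqrt E * fst y + F * snd y / sqrt E" "m2 = sqrt (E * G - F\<^sup>2) * snd y / sqrt E"
  have x: "x = onb_coeffs E F G l1 m1" and y: "y = onb_coeffs E F G l2 m2"
    unfolding l1_m1_l2_m2_def by (rule onb_coeffs_surj)+
  have on: "l1\<^sup>2 + m1\<^sup>2 = 1" "l2\<^sup>2 + m2\<^sup>2 = 1" "l1 * l2 + m1 * m2 = 0"
    using assms unfolding x y first_form_onb_coeffs by (simp_all add: power2_eq_square)
  note cancel = orthonormal_R2_double_angle_sums[OF on]
  have "sigma_form s11 s12 s22 x x + sigma_form s11 s12 s22 y y =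
      (l1\<^sup>2 + m1\<^sup>2 + (l2\<^sup>2 + m2\<^sup>2)) *\<^sub>R ellipse_centre s11 s12 s22 E F G
      + ((l1\<^sup>2 - m1\<^sup>2) + (l2\<^sup>2 - m2\<^sup>2)) *\<^sub>R ellipse_axis1 s11 s12 s22 E F G
      + (2 * (l1 * m1 + l2 * m2)) *\<^sub>R ellipse_axis2 s11 s12 s22 E F G"
    unfolding x y sigma_form_onb_coeffs by (simp add: algebra_simps)
  then show ?thesis using on cancel by simp
qed


lemma wedge_ellipse_axes:
  "wedge e1 e2 (ellipse_axis1 s11 s12 s22 E F G) (ellipse_axis2 s11 s12 s22 E F G) =
    (G * wedge e1 e2 s11 s12 + E * wedge e1 e2 s12 s22 - F * wedge e1 e2 s11 s22)
      / (2 * (E * G - F\<^sup>2) * sqrt (E * G - F\<^sup>2))"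
proof -
  obtain s W where "W > 0" and roots: "sqrt (E * G - F\<^sup>2) = W" "E * G - F\<^sup>2 = W\<^sup>2" "G = (W\<^sup>2 + F\<^sup>2) / E"
    by (rule first_form_roots)
  show ?thesis
    unfolding ellipse_axis1_def ellipse_axis2_def wedge_lincomb3 scaleR_Pair roots(1,2) unfolding roots(3)
    using E \<open>W > 0\<close> by (simp add: field_simps power2_eq_square)
qed

lemma wedge_centre_axis1:
  "wedge e1 e2 (ellipse_centre s11 s12 s22 E F G) (ellipse_axis1 s11 s12 s22 E F G) =
    (2 * F * wedge e1 e2 s11 s12 - E * wedge e1 e2 s11 s22) / (2 * E * (E * G - F\<^sup>2))"
proof -
  obtain s W where "W > 0" and roots: "sqrt (E * G - F\<^sup>2) = W" "E * G - F\<^sup>2 = W\<^sup>2" "G = (W\<^sup>2 + F\<^sup>2) / E"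
    by (rule first_form_roots)
  show ?thesis
    unfolding ellipse_centre_def ellipse_axis1_def wedge_lincomb3 scaleR_Pair roots(1,2) unfolding roots(3)
    using E \<open>W > 0\<close> by (simp add: field_simps power2_eq_square)
qed

lemma wedge_centre_axis2:
  "wedge e1 e2 (ellipse_centre s11 s12 s22 E F G) (ellipse_axis2 s11 s12 s22 E F G) =
    ((G * E - 2 * F\<^sup>2) * wedge e1 e2 s11 s12 - E\<^sup>2 * wedge e1 e2 s12 s22 + E * F * wedge e1 e2 s11 s22)
      / (2 * (E * G - F\<^sup>2) * E * sqrt (E * G - F\<^sup>2))"
proof -
  obtain s W where "W > 0" and roots: "sqrt (E * G - F\<^sup>2) = W" "E * G - F\<^sup>2 = W\<^sup>2" "G = (W\<^sup>2 + F\<^sup>2) / E"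
    by (rule first_form_roots)
  show ?thesis
    unfolding ellipse_centre_def ellipse_axis2_def wedge_lincomb3 scaleR_Pair roots(1,2) unfolding roots(3)
    using E \<open>W > 0\<close> by (simp add: field_simps power2_eq_square)
qed


lemma ellipse_segment_condition_iff:
  fixes s11 s12 s22 e1 e2 :: "'a::real_inner"
  defines "H \<equiv> ellipse_centre s11 s12 s22 E F G" and "a1 \<equiv> ellipse_axis1 s11 s12 s22 E F G"
    and "a2 \<equiv> ellipse_axis2 s11 s12 s22 E F G"
  shows "wedge e1 e2 a1 a2 = 0 \<and> (wedge e1 e2 H a1 \<noteq> 0 \<or> wedge e1 e2 H a2 \<noteq> 0)
    \<longleftrightarrow> G * wedge e1 e2 s11 s12 + E * wedge e1 e2 s12 s22 - F * wedge e1 e2 s11 s22 = 0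
      \<and> \<not> (wedge e1 e2 s11 s12 = 0 \<and> wedge e1 e2 s11 s22 = 0 \<and> wedge e1 e2 s12 s22 = 0)"
proof -
  define w12 w13 w23 where "w12 = wedge e1 e2 s11 s12" and "w13 = wedge e1 e2 s11 s22"
    and "w23 = wedge e1 e2 s12 s22"
  have root: "sqrt (E * G - F\<^sup>2) > 0" using gram by simp
  have "wedge e1 e2 a1 a2 = 0 \<longleftrightarrow> G * w12 + E * w23 - F * w13 = 0"
    unfolding a1_def a2_def wedge_ellipse_axes w12_def w13_def w23_def using gram root by simp
  moreover have "wedge e1 e2 H a1 \<noteq> 0 \<or> wedge e1 e2 H a2 \<noteq> 0 \<longleftrightarrow> \<not> (w12 = 0 \<and> w13 = 0 \<and> w23 = 0)"
    if trace: "G * w12 + E * w23 - F * w13 = 0"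
  proof -
    have Ew23: "E * w23 = F * w13 - G * w12" using trace by simp
    then have "w12 = 0 \<and> w13 = 0 \<longrightarrow> w23 = 0" using E by auto
    have "E\<^sup>2 * w23 = E * (F * w13 - G * w12)" using Ew23 by (simp add: power2_eq_square mult.assoc)
    then have "(G * E - 2 * F\<^sup>2) * w12 - E\<^sup>2 * w23 + E * F * w13 = 2 * (E * G - F\<^sup>2) * w12"
      by (simp add: algebra_simps)
    then have "wedge e1 e2 H a2 = w12 / (E * sqrt (E * G - F\<^sup>2))"
      unfolding H_def a2_def wedge_centre_axis2 w12_def w13_def w23_def using E gram by simp
    moreover have "wedge e1 e2 H a1 = (2 * F * w12 - E * w13) / (2 * E * (E * G - F\<^sup>2))"
      unfolding H_def a1_def wedge_centre_axis1 w12_def w13_def ..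
    ultimately show ?thesis using E gram root \<open>w12 = 0 \<and> w13 = 0 \<longrightarrow> w23 = 0\<close> by auto
  qed
  ultimately show ?thesis unfolding w12_def w13_def w23_def by blast
qed

end

section \<open>Surfaces in R^4\<close>

lemma vector4_nth:
  "(vector [a, b, c, d] :: ('a::zero)^4) $ 1 = a"
  "(vector [a, b, c, d] :: ('a::zero)^4) $ 2 = b"
  "(vector [a, b, c, d] :: ('a::zero)^4) $ 3 = c"
  "(vector [a, b, c, d] :: ('a::zero)^4) $ 4 = d"
  unfolding vector_def by simp_all

lemma sum_UNIV_4: "(\<Sum>i\<in>(UNIV :: 4 set). f i) = f 1 + f 2 + f 3 + f 4"
proof -
  have UNIV_4: "(UNIV :: 4 set) = {1, 2, 3, 4}" using exhaust_4 by blast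
  show ?thesis unfolding UNIV_4 by (simp add: add.assoc)
qed

lemma independent_with_normal_pair:
  fixes u v e1 e2 :: "'a::real_inner"
  assumes gram: "(u \<bullet> u) * (v \<bullet> v) - (u \<bullet> v)\<^sup>2 > 0"
    and normal: "e1 \<bullet> u = 0" "e1 \<bullet> v = 0" "e2 \<bullet> u = 0" "e2 \<bullet> v = 0"
    and orthonormal: "e1 \<bullet> e1 = 1" "e2 \<bullet> e2 = 1" "e1 \<bullet> e2 = 0"
    and zero: "a *\<^sub>R u + b *\<^sub>R v + c *\<^sub>R e1 + d *\<^sub>R e2 = 0"
  shows "a = 0 \<and> b = 0 \<and> c = 0 \<and> d = 0"
proof -
  have ip: "(a *\<^sub>R u + b *\<^sub>R v + c *\<^sub>R e1 + d *\<^sub>R e2) \<bullet> x = 0" for x using zero by simp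
  have sym: "u \<bullet> e1 = 0" "v \<bullet> e1 = 0" "u \<bullet> e2 = 0" "v \<bullet> e2 = 0" "e2 \<bullet> e1 = 0" "v \<bullet> u = u \<bullet> v"
    using normal orthonormal by (simp_all add: inner_commute)
  have "c = 0" "d = 0" using ip[of e1] ip[of e2] orthonormal sym by (simp_all add: inner_add_left)
  then have 1: "a * (u \<bullet> u) + b * (u \<bullet> v) = 0" and 2: "a * (u \<bullet> v) + b * (v \<bullet> v) = 0"
    using ip[of u] ip[of v] sym by (simp_all add: inner_add_left)
  have "a * ((u \<bullet> u) * (v \<bullet> v) - (u \<bullet> v)\<^sup>2) = (v \<bullet> v) * (a * (u \<bullet> u) + b * (u \<bullet> v)) - (u \<bullet> v) * (a * (u \<bullet> v) + b * (v \<bullet> v))"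
    "b * ((u \<bullet> u) * (v \<bullet> v) - (u \<bullet> v)\<^sup>2) = (u \<bullet> u) * (a * (u \<bullet> v) + b * (v \<bullet> v)) - (u \<bullet> v) * (a * (u \<bullet> u) + b * (u \<bullet> v))"
    by (simp_all add: algebra_simps power2_eq_square)
  then have "a * ((u \<bullet> u) * (v \<bullet> v) - (u \<bullet> v)\<^sup>2) = 0" "b * ((u \<bullet> u) * (v \<bullet> v) - (u \<bullet> v)\<^sup>2) = 0"
    unfolding 1 2 by simp_all
  then have "a = 0" "b = 0" using gram by simp_all
  with \<open>c = 0\<close> \<open>d = 0\<close> show ?thesis by simp
qed

lemma det_vector4_nonzero:
  fixes u v e1 e2 :: "real^4"
  assumes "(u \<bullet> u) * (v \<bullet> v) - (u \<bullet> v)\<^sup>2 > 0"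
    and "e1 \<bullet> u = 0" "e1 \<bullet> v = 0" "e2 \<bullet> u = 0" "e2 \<bullet> v = 0" "e1 \<bullet> e1 = 1" "e2 \<bullet> e2 = 1" "e1 \<bullet> e2 = 0"
  shows "det (vector [u, v, e1, e2] :: real^4^4) \<noteq> 0"
proof -
  let ?A = "vector [u, v, e1, e2] :: real^4^4"
  have "\<forall>c. (\<Sum>i\<in>UNIV. c i *s row i ?A) = 0 \<longrightarrow> (\<forall>i. c i = 0)"
  proof (rule allI, rule impI)
    fix c :: "4 \<Rightarrow> real"
    assume "(\<Sum>i\<in>UNIV. c i *s row i ?A) = 0"
    then have "c 1 *\<^sub>R u + c 2 *\<^sub>R v + c 3 *\<^sub>R e1 + c 4 *\<^sub>R e2 = 0"
      unfolding sum_UNIV_4 by (simp add: row_def vector4_nth scalar_mult_eq_scaleR)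
    then have "c 1 = 0 \<and> c 2 = 0 \<and> c 3 = 0 \<and> c 4 = 0"
      by (rule independent_with_normal_pair[OF assms])
    then show "\<forall>i. c i = 0" using exhaust_4 by metis
  qed
  then obtain B where "?A ** B = mat 1"
    using matrix_right_invertible_independent_rows by blast
  then show ?thesis
    using matrix_left_right_inverse invertible_def invertible_det_nz by blast
qed

lemma det_vector4_neg_last:
  fixes u v e1 e2 :: "real^4"
  shows "det (vector [u, v, e1, -e2] :: real^4^4) = - det (vector [u, v, e1, e2] :: real^4^4)"
proof -
  let ?A = "vector [u, v, e1, e2] :: real^4^4"
  have eq: "(vector [u, v, e1, -e2] :: real^4^4) = (\<chi> i. if i = 4 then (-1) *s (?A$i) else ?A$i)"
    by (simp add: vec_eq_iff forall_4 vector4_nth scalar_mult_eq_scaleR)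
  have "det (\<chi> i. if i = 4 then (-1::real) *s (?A$i) else ?A$i) = (-1) * det (\<chi> i. if i = 4 then ?A$i else ?A$i)"
    by (rule det_row_mul)
  then show ?thesis using eq by (simp add: vec_lambda_eta)
qed

lemma positive_normal_frame_exists:
  fixes u v :: "real^4"
  assumes gram: "(u \<bullet> u) * (v \<bullet> v) - (u \<bullet> v)\<^sup>2 > 0"
  shows "\<exists>e1 e2. e1 \<bullet> u = 0 \<and> e1 \<bullet> v = 0 \<and> e2 \<bullet> u = 0 \<and> e2 \<bullet> v = 0 \<and>
     norm e1 = 1 \<and> norm e2 = 1 \<and> e1 \<bullet> e2 = 0 \<and>
     det (vector [u, v, e1, e2] :: real^4^4) > 0"
proof -
  have "dim {u, v} \<le> card {u, v}" by (rule dim_le_card') simp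
  also have "\<dots> \<le> 2" by (simp add: card_insert_le_m1)
  finally have "dim {u, v} < DIM(real^4)" by simp
  then obtain x1 where x1: "x1 \<noteq> 0" "\<And>y. y \<in> span {u, v} \<Longrightarrow> orthogonal x1 y"
    using orthogonal_to_subspace_exists by blast
  have "dim {u, v, x1} \<le> card {u, v, x1}" by (rule dim_le_card') simp
  also have "\<dots> \<le> 3" by (simp add: card_insert_le_m1)
  finally have "dim {u, v, x1} < DIM(real^4)" by simp
  then obtain x2 where x2: "x2 \<noteq> 0" "\<And>y. y \<in> span {u, v, x1} \<Longrightarrow> orthogonal x2 y"
    using orthogonal_to_subspace_exists by blast
  define e1 where "e1 = (1 / norm x1) *\<^sub>R x1"
  define e2 where "e2 = (1 / norm x2) *\<^sub>R x2"
  have o1: "x1 \<bullet> u = 0" "x1 \<bullet> v = 0" using x1(2)[of u] x1(2)[of v]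
    by (auto simp: orthogonal_def span_base)
  have o2: "x2 \<bullet> u = 0" "x2 \<bullet> v = 0" "x2 \<bullet> x1 = 0" using x2(2)[of u] x2(2)[of v] x2(2)[of x1]
    by (auto simp: orthogonal_def span_base)
  have n1: "norm e1 = 1" "norm e2 = 1" using x1 x2 by (simp_all add: e1_def e2_def)
  have ee: "e1 \<bullet> e1 = 1" "e2 \<bullet> e2 = 1" using n1 by (simp_all add: norm_eq_1)
  have oe: "e1 \<bullet> u = 0" "e1 \<bullet> v = 0" "e2 \<bullet> u = 0" "e2 \<bullet> v = 0" "e1 \<bullet> e2 = 0"
    using o1 o2 by (simp_all add: e1_def e2_def inner_commute)
  have nz: "det (vector [u, v, e1, e2] :: real^4^4) \<noteq> 0"
    by (rule det_vector4_nonzero[OF gram oe(1-4) ee oe(5)])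
  show ?thesis
  proof (cases "det (vector [u, v, e1, e2] :: real^4^4) > 0")
    case True then show ?thesis using oe n1 by (intro exI[of _ e1] exI[of _ e2]) simp
  next
    case False
    then have "det (vector [u, v, e1, -e2] :: real^4^4) > 0" using nz det_vector4_neg_last[of u v e1 e2] by simp
    moreover have "(-e2) \<bullet> u = 0" "(-e2) \<bullet> v = 0" "norm (-e2) = 1" "e1 \<bullet> (-e2) = 0" using oe n1 by simp_all
    ultimately show ?thesis using oe n1 by (intro exI[of _ e1] exI[of _ "-e2"]) simp
  qed
qed

lemma independent_pair_gram_pos:
  fixes u v :: "'a::real_inner"
  assumes ind: "independent {u, v}" and uv: "u \<noteq> v"
  shows "u \<bullet> u > 0" "(u \<bullet> u) * (v \<bullet> v) - (u \<bullet> v)\<^sup>2 > 0"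
proof -
  have "independent (insert u {v})" using ind by simp
  then have nus: "u \<notin> span {v}" and iv: "independent {v}" using uv by (auto simp: independent_insert)
  have v0: "v \<noteq> 0" using iv by (auto simp: independent_insert)
  have u0: "u \<noteq> 0" using nus span_zero by blast
  show "u \<bullet> u > 0" using u0 by simp
  have G: "v \<bullet> v > 0" using v0 by simp
  define w where "w = u - ((u \<bullet> v) / (v \<bullet> v)) *\<^sub>R v"
  have "w \<noteq> 0"
  proof
    assume "w = 0"
    then have "u = ((u \<bullet> v) / (v \<bullet> v)) *\<^sub>R v" by (simp add: w_def)
    then have "u \<in> span {v}" by (metis span_base span_scale singletonI)
    then show False using nus by blast
  qed
  then have wp: "w \<bullet> w > 0" by simp
  have "w \<bullet> w = (u \<bullet> u) - (u \<bullet> v)\<^sup>2 / (v \<bullet> v)"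
    unfolding w_def using G
    by (simp add: inner_diff_left inner_diff_right inner_commute[of v u] field_simps power2_eq_square)
  then have "(u \<bullet> u) * (v \<bullet> v) - (u \<bullet> v)\<^sup>2 = (v \<bullet> v) * (w \<bullet> w)"
    using G by (simp add: field_simps)
  then show "(u \<bullet> u) * (v \<bullet> v) - (u \<bullet> v)\<^sup>2 > 0" using G wp by simp
qed

lemma regular_surface_first_form:
  assumes "regular_surface z U" and "p \<in> U"
  shows "coefE z p > 0" and "coefE z p * coefG z p - (coefF z p)\<^sup>2 > 0"
  using independent_pair_gram_pos[of "zu z p" "zv z p"] assms
  by (simp_all add: regular_surface_def coefE_def coefF_def coefG_def)

lemma regular_surface_normal_frame:
  assumes "regular_surface z U" and "p \<in> U"
  shows "orthonormal_pair (ne1 z p) (ne2 z p)"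
proof -
  have "\<exists>f. pos_normal_frame z p (fst f) (snd f)"
    using positive_normal_frame_exists regular_surface_first_form[OF assms]
    unfolding pos_normal_frame_def coefE_def coefF_def coefG_def by fastforce
  then have "pos_normal_frame z p (ne1 z p) (ne2 z p)"
    unfolding ne1_def ne2_def nframe_def by (rule someI_ex)
  then show ?thesis by unfold_locales (simp_all add: pos_normal_frame_def norm_eq_1)
qed

lemma sig_in_normal_plane:
  "sig11 z p \<in> span {ne1 z p, ne2 z p}" "sig12 z p \<in> span {ne1 z p, ne2 z p}"
  "sig22 z p \<in> span {ne1 z p, ne2 z p}"
  unfolding sig11_def sig12_def sig22_def nproj_def by (simp_all add: span_add span_scale span_base)

lemma coefLMN_wedge:
  fixes z :: "real^2 \<Rightarrow> real^4" and p :: "real^2"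
  defines "w \<equiv> wedge (ne1 z p) (ne2 z p)"
  shows "coefL z p = 2 / coefW z p * w (sig11 z p) (sig12 z p)"
    and "coefM z p = 1 / coefW z p * w (sig11 z p) (sig22 z p)"
    and "coefN z p = 2 / coefW z p * w (sig12 z p) (sig22 z p)"
  unfolding coefL_def coefM_def coefN_def cc_def w_def wedge_def by (simp_all add: Let_def)

lemma indicatrix_rect_hyperbola_iff:
  assumes "regular_surface z U" and "p \<in> U"
  shows "indicatrix_rect_hyperbola z p \<longleftrightarrow>
    coefE z p * coefN z p + coefG z p * coefL z p - 2 * coefF z p * coefM z p = 0 \<and> \<not> flat_point z p"
  unfolding indicatrix_rect_hyperbola_def principal_normal_curvatures_def flat_point_def
    opposite_nonzero_roots_iff[OF regular_surface_first_form(2)[OF assms]]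
  using discriminant_neg_iff[OF regular_surface_first_form[OF assms]] by blast

lemma tvec_inner: "tvec z p x \<bullet> tvec z p y = first_form (coefE z p) (coefF z p) (coefG z p) x y"
  unfolding tvec_def coefE_def coefF_def coefG_def by (rule first_form_eq_inner)

lemma sff_eq_sigma_form: "sff z p = sigma_form (sig11 z p) (sig12 z p) (sig22 z p)"
  by (simp add: fun_eq_iff sff_def sigma_form_def)

lemma normal_ellipse_eq_ellipse:
  assumes "regular_surface z U" and "p \<in> U"
  shows "normal_ellipse z p = ellipse
    (ellipse_centre (sig11 z p) (sig12 z p) (sig22 z p) (coefE z p) (coefF z p) (coefG z p))
    (ellipse_axis1 (sig11 z p) (sig12 z p) (sig22 z p) (coefE z p) (coefF z p) (coefG z p))
    (ellipse_axis2 (sig11 z p) (sig12 z p) (sig22 z p) (coefE z p) (coefF z p) (coefG z p))"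
  unfolding normal_ellipse_def sff_eq_sigma_form norm_eq_1 tvec_inner
  by (rule sigma_form_image_unit_circle[OF regular_surface_first_form[OF assms]])

lemma mean_curv_eq_ellipse_centre:
  assumes "regular_surface z U" and "p \<in> U"
  shows "mean_curv z p =
    ellipse_centre (sig11 z p) (sig12 z p) (sig22 z p) (coefE z p) (coefF z p) (coefG z p)"
proof -
  note first_form = regular_surface_first_form[OF assms]
  let ?onb = "onb_coeffs (coefE z p) (coefF z p) (coefG z p)"
  let ?P = "\<lambda>h. \<exists>x y. norm (tvec z p x) = 1 \<and> norm (tvec z p y) = 1 \<and> tvec z p x \<bullet> tvec z p y = 0 \<and>
    h = (1 / 2) *\<^sub>R (sff z p x x + sff z p y y)"
  have "first_form (coefE z p) (coefF z p) (coefG z p) (?onb 1 0) (?onb 1 0) = 1"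
    "first_form (coefE z p) (coefF z p) (coefG z p) (?onb 0 1) (?onb 0 1) = 1"
    "first_form (coefE z p) (coefF z p) (coefG z p) (?onb 1 0) (?onb 0 1) = 0"
    unfolding first_form_onb_coeffs[OF first_form] by simp_all
  then have "?P ((1 / 2) *\<^sub>R (sff z p (?onb 1 0) (?onb 1 0) + sff z p (?onb 0 1) (?onb 0 1)))"
    unfolding norm_eq_1 tvec_inner by blast
  then have "?P (mean_curv z p)" unfolding mean_curv_def by (rule someI[of ?P])
  then obtain x y where "first_form (coefE z p) (coefF z p) (coefG z p) x x = 1"
    "first_form (coefE z p) (coefF z p) (coefG z p) y y = 1"
    "first_form (coefE z p) (coefF z p) (coefG z p) x y = 0"
    and "mean_curv z p = (1 / 2) *\<^sub>R (sff z p x x + sff z p y y)"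
    unfolding norm_eq_1 tvec_inner by blast
  then show ?thesis unfolding sff_eq_sigma_form by (simp add: sigma_form_orthonormal_mean[OF first_form])
qed

lemma lincomb3_in_span:
  assumes "s11 \<in> span S" "s12 \<in> span S" "s22 \<in> span S"
  shows "lincomb3 s11 s12 s22 c \<in> span S"
  unfolding lincomb3_def using assms by (intro span_add span_scale)

lemma ellipse_segment_not_collinear_H_iff:
  assumes "regular_surface z U" and "p \<in> U"
  shows "ellipse_segment_not_collinear_H z p \<longleftrightarrow>
    coefE z p * coefN z p + coefG z p * coefL z p - 2 * coefF z p * coefM z p = 0 \<and> \<not> flat_point z p"
proof -
  interpret orthonormal_pair "ne1 z p" "ne2 z p" by (rule regular_surface_normal_frame[OF assms])
  note first_form = regular_surface_first_form[OF assms]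
  define w12 w13 w23 where "w12 = wedge (ne1 z p) (ne2 z p) (sig11 z p) (sig12 z p)"
    and "w13 = wedge (ne1 z p) (ne2 z p) (sig11 z p) (sig22 z p)"
    and "w23 = wedge (ne1 z p) (ne2 z p) (sig12 z p) (sig22 z p)"
  define K where "K = coefG z p * w12 + coefE z p * w23 - coefF z p * w13"
  have W: "coefW z p > 0" using first_form(2) by (simp add: coefW_def)
  have "ellipse_segment_not_collinear_H z p \<longleftrightarrow> K = 0 \<and> \<not> (w12 = 0 \<and> w13 = 0 \<and> w23 = 0)"
    unfolding ellipse_segment_not_collinear_H_def normal_ellipse_eq_ellipse[OF assms]
      mean_curv_eq_ellipse_centre[OF assms] K_def w12_def w13_def w23_def
      ellipse_segment_condition_iff[OF first_form, symmetric]
    unfolding ellipse_centre_def ellipse_axis1_def ellipse_axis2_def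
    by (intro ellipse_segment_not_collinear_iff lincomb3_in_span sig_in_normal_plane)
  moreover have "coefE z p * coefN z p + coefG z p * coefL z p - 2 * coefF z p * coefM z p = 2 / coefW z p * K"
    unfolding coefLMN_wedge K_def w12_def w13_def w23_def by (simp add: algebra_simps)
  moreover have "flat_point z p \<longleftrightarrow> w12 = 0 \<and> w13 = 0 \<and> w23 = 0"
    unfolding flat_point_def coefLMN_wedge w12_def w13_def w23_def using W by simp
  ultimately show ?thesis using W by simp
qed

theorem corollary3p6:
  fixes z :: "real^2 \<Rightarrow> real^4" and U :: "(real^2) set"
  assumes "regular_surface z U"
    and "\<forall>p\<in>U. \<not> flat_point z p"
  shows "(\<forall>p\<in>U. indicatrix_rect_hyperbola z p) \<longleftrightarrow>
         (\<forall>p\<in>U. ellipse_segment_not_collinear_H z p)"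
  using indicatrix_rect_hyperbola_iff[OF assms(1)] ellipse_segment_not_collinear_H_iff[OF assms(1)]
  by simp

end
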